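(* Fix a client $k\in[N]$, real numbers $\lambda^{(1)}_u,\lambda^{(2)}_u$ ($u\in\mathcal U_g$) and $\mu^{(1)}_{k,u},\mu^{(2)}_{k,u}$ ($u\in\mathcal U_{l,k}$), and for $a\in\mathcal A$ set $$\mathbf M^{\lambda,\mu}(a,k)=\mathbf I-\frac{1}{p_{a,k}}\Big[\sum_{u\in\mathcal U_g}(\lambda^{(1)}_u-\lambda^{(2)}_u)\mathbf D^{a,k}_u-\sum_{u\in\mathcal U_{l,k}}(\mu^{(1)}_{k,u}-\mu^{(2)}_{k,u})\mathbf D^{a,k}_u\Big],$$ and $\overline{\mathbf M}^{\lambda,\mu}(a,k)=\mathbf M^{\lambda,\mu}(a,k)+\kappa\mathbf 1_{m\times m}$, where the constant $\kappa$ is chosen so that all entries of $\overline{\mathbf M}^{\lambda,\mu}(a,k)$ are strictly positive for every $a\in\mathcal A$. For a scoring function $\mathbf s:\mathcal X\to\mathbb R^m$ define the personalized cost-sensitive loss $$\ell_k(y,\mathbf s(x),a)=-\sum_{i=1}^m\overline{\mathbf M}^{\lambda,\mu}_{y,i}(a,k)\log\frac{\exp([\mathbf s(x)]_i)}{\sum_{j=1}^m\exp([\mathbf s(x)]_j)}.$$ Let $\mathbf s_k^*$ be a scoring function minimizing the expected loss $\mathbb E[\ell_k(Y,\mathbf s(X),A)\mid K=k]$ over the local data distribution $\mathbb P(X,A,Y\mid K=k)$. Then the classifier $h_k^*(x)=e_y$, $y\in\arg\max_{j\in[m]}[\mathbf s_k^*(x)]_j$, coincides with the classifier $x\mapsto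 e_y$, $y\in\arg\max_{j\in[m]}\big(\sum_{a\in\mathcal A}\mathbb P(A=a\mid X=x,K=k)[\mathbf M^{\lambda,\mu}(a,k)]^\top\eta(x,a,k)\big)_j$; precisely, for ($\mathbb P(X\mid K=k)$-almost) every $x$, $$\arg\max_{j\in[m]}[\mathbf s_k^*(x)]_j\subseteq\arg\max_{j\in[m]}\Big(\sum_{a\in\mathcal A}\mathbb P(A=a\mid X=x,K=k)\,[\mathbf M^{\lambda,\mu}(a,k)]^\top\eta(x,a,k)\Big)_j.$$
   Context: Let $(X,A,Y,K)$ be a random tuple with $X\in\mathcal X\subseteq\mathbb R^d$, sensitive attribute $A$ in a finite set $\mathcal A$, label $Y\in[m]$ and client index $K\in[N]$; $p_{a,k}=\mathbb P(A=a,K=k)>0$. The Bayes score is $\eta(x,a,k)\in\Delta_m$ with $\eta_y(x,a,k)=\mathbb P(Y=y\mid X=x,A=a,K=k)$, $\Delta_m$ being the probability simplex in $\mathbb R^m$ and $e_y$ the $y$-th standard basis vector. $\mathcal U_g$ and $\mathcal U_{l,k}$ are finite index sets and $\mathbf D^{a,k}_u$ ($a\in\mathcal A$, $u\in\mathcal U_g\cup\mathcal U_{l,k}$) are fixed real $m\times m$ matrices. $\mathbf I$ is the $m\times m$ identity and $\mathbf 1_{m\times m}$ the all-ones matrix. Minimization is over measurable $\mathbf s:\mathcal X\to\mathbb R^m$. *)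

theory Defs
  imports "HOL-Probability.Probability"
begin

definition Mmat :: "real \<Rightarrow> ('u \<Rightarrow> real) \<Rightarrow> ('u \<Rightarrow> real) \<Rightarrow> ('u \<Rightarrow> real) \<Rightarrow> ('u \<Rightarrow> real)
    \<Rightarrow> 'u set \<Rightarrow> 'u set \<Rightarrow> ('u \<Rightarrow> real^'m^'m) \<Rightarrow> real^'m^'m" where
  "Mmat p lam1 lam2 mu1 mu2 Ug Ul D =
     mat 1 - (1 / p) *\<^sub>R ((\<Sum>u\<in>Ug. (lam1 u - lam2 u) *\<^sub>R D u) - (\<Sum>u\<in>Ul. (mu1 u - mu2 u) *\<^sub>R D u))"

definition Mbar :: "real \<Rightarrow> real^'m^'m \<Rightarrow> real^'m^'m" where
  "Mbar \<kappa> M = M + (\<chi> i j. \<kappa>)"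

definition pcs_loss :: "real^'m^'m \<Rightarrow> 'm \<Rightarrow> real^'m \<Rightarrow> real" where
  "pcs_loss Mb y z = - (\<Sum>i\<in>UNIV. Mb $ y $ i * ln (exp (z $ i) / (\<Sum>j\<in>UNIV. exp (z $ j))))"

definition argmax_set :: "real^'m \<Rightarrow> 'm set" where
  "argmax_set v = {j. \<forall>i. v $ i \<le> v $ j}"

definition cond_exp_event :: "'w measure \<Rightarrow> ('w \<Rightarrow> real) \<Rightarrow> 'w set \<Rightarrow> ennreal" where
  "cond_exp_event M f E = (\<integral>\<^sup>+ w. ennreal (f w) * indicator E w \<partial>M) / emeasure M E"

end

theory Submission
  imports Defs
begin

(* Conditioning on the features X, with the conditional probabilities eta and q, turns the local
   risk of a score s into the expectation, over X on the event K = k, of the cross-entropy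
   sum_i c_i(X) (- log softmax(s(X))_i) with weights c(X) = sum_a q(X,a) Mbar(a,k)^T eta(X,a,k),
   which are either all positive or all zero. By Gibbs' inequality this cross-entropy is minimal
   at s = log c and strictly larger whenever argmax s is not contained in argmax c. The risk of
   log c being finite, a risk minimizer must attain the pointwise minimum almost everywhere.
   Finally, the all-ones shift by kappa adds the same constant kappa sum_a q(X,a) to every
   coordinate of c(X), so argmax c(X) is the argmax of sum_a q(X,a) M(a,k)^T eta(X,a,k). *)

section \<open>Softmax cross-entropy\<close>

definition softmax :: "real^'m::finite \<Rightarrow> real^'m" where
  "softmax z = (\<chi> i. exp (z $ i) / (\<Sum>j\<in>UNIV. exp (z $ j)))"

definition cross_entropy :: "real^'m::finite \<Rightarrow> real^'m \<Rightarrow> real" where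
  "cross_entropy c z = (\<Sum>i\<in>UNIV. c $ i * - ln (softmax z $ i))"

lemma sum_exp_pos: "0 < (\<Sum>j\<in>UNIV. exp (z $ j :: real))"
  by (intro sum_pos) auto

lemma softmax_pos: "0 < softmax z $ i"
  unfolding softmax_def using sum_exp_pos[of z] by simp

lemma sum_softmax: "(\<Sum>i\<in>UNIV. softmax z $ i) = 1"
  unfolding softmax_def using sum_exp_pos[of z] by (simp add: sum_divide_distrib[symmetric])

lemma softmax_le_1: "softmax z $ i \<le> 1"
  using member_le_sum[of i UNIV "\<lambda>j. softmax z $ j"] softmax_pos[of z] sum_softmax[of z]
  by (simp add: less_imp_le)

lemma softmax_le_iff: "softmax z $ i \<le> softmax z $ j \<longleftrightarrow> z $ i \<le> z $ j"
  unfolding softmax_def using sum_exp_pos[of z] by (simp add: divide_le_cancel)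

lemma argmax_set_softmax: "argmax_set (softmax z) = argmax_set z"
  by (simp add: argmax_set_def softmax_le_iff)

lemma argmax_set_scaleR: "0 < r \<Longrightarrow> argmax_set (r *\<^sub>R v) = argmax_set v"
  by (simp add: argmax_set_def)

lemma argmax_set_add_const: "argmax_set (v + r *\<^sub>R 1) = argmax_set v"
  by (simp add: argmax_set_def)

lemma softmax_ln:
  assumes "\<And>i. 0 < c $ i"
  shows "softmax (\<chi> i. ln (c $ i)) = (1 / (\<Sum>j\<in>UNIV. c $ j)) *\<^sub>R c"
  using assms by (simp add: softmax_def vec_eq_iff)

lemma cross_entropy_nonneg: "(\<And>i. 0 \<le> c $ i) \<Longrightarrow> 0 \<le> cross_entropy c z"
  unfolding cross_entropy_def using softmax_pos[of z] softmax_le_1[of z]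
  by (intro sum_nonneg mult_nonneg_nonneg) auto

lemma cross_entropy_sum: "cross_entropy (\<Sum>a\<in>I. c a) z = (\<Sum>a\<in>I. cross_entropy (c a) z)"
  unfolding cross_entropy_def sum_component sum_distrib_right sum_negf
  by (rule sum.swap)

lemma cross_entropy_scaleR: "cross_entropy (r *\<^sub>R c) z = r * cross_entropy c z"
  unfolding cross_entropy_def by (simp add: sum_distrib_left mult.assoc)

lemma cross_entropy_transpose_mult_vec:
  "cross_entropy (transpose C *v v) z = (\<Sum>y\<in>UNIV. v $ y * cross_entropy (C $ y) z)"
  unfolding cross_entropy_def sum_distrib_left
proof (rule trans[OF _ sum.swap])
  show "(\<Sum>i\<in>UNIV. (transpose C *v v) $ i * - ln (softmax z $ i))
    = (\<Sum>i\<in>UNIV. \<Sum>y\<in>UNIV. v $ y * (C $ y $ i * - ln (softmax z $ i)))"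
    by (simp add: matrix_vector_mult_def transpose_def sum_distrib_left sum_distrib_right sum_negf mult_ac)
qed

lemma pcs_loss_eq_cross_entropy: "pcs_loss C y z = cross_entropy (C $ y) z"
  unfolding pcs_loss_def cross_entropy_def softmax_def by (simp add: sum_negf)

lemma ln_less_minus_one:
  fixes x :: real assumes "0 < x" "x \<noteq> 1" shows "ln x < x - 1"
proof -
  have "ln x = 2 * ln (sqrt x)" using assms by (simp add: ln_sqrt)
  also have "\<dots> \<le> 2 * (sqrt x - 1)" using ln_le_minus_one[of "sqrt x"] assms by simp
  also have "\<dots> < x - 1"
  proof -
    have "0 < (sqrt x - 1)\<^sup>2" using assms by simp
    then show ?thesis using assms by (simp add: power2_eq_square algebra_simps)
  qed
  finally show ?thesis .
qed

lemma gibbs_term_eq: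
  fixes c p C :: real assumes "0 < c" "0 < p" "0 < C"
  shows "c * - ln (c / C) = c * - ln p + c * ln (C * p / c)"
  using assms by (simp add: ln_div ln_mult algebra_simps)

lemma gibbs_term_le:
  fixes c p C :: real assumes "0 < c" "0 < p" "0 < C"
  shows "c * - ln (c / C) \<le> c * - ln p + (C * p - c)"
proof -
  have "c * ln (C * p / c) \<le> c * (C * p / c - 1)"
    using assms ln_le_minus_one[of "C * p / c"] by (intro mult_left_mono) auto
  then show ?thesis using assms gibbs_term_eq[OF assms] by (simp add: algebra_simps)
qed

lemma gibbs_term_less:
  fixes c p C :: real assumes "0 < c" "0 < p" "0 < C" "C * p \<noteq> c"
  shows "c * - ln (c / C) < c * - ln p + (C * p - c)"
proof -
  have "c * ln (C * p / c) < c * (C * p / c - 1)"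
    using assms ln_less_minus_one[of "C * p / c"] by (intro mult_strict_left_mono) auto
  then show ?thesis using assms gibbs_term_eq[OF assms(1-3)] by (simp add: algebra_simps)
qed

lemma gibbs_inequality:
  fixes c p :: "real^'m::finite"
  assumes c: "\<And>i. 0 < c $ i" and p: "\<And>i. 0 < p $ i" "(\<Sum>i\<in>UNIV. p $ i) = 1"
  defines "C \<equiv> \<Sum>j\<in>UNIV. c $ j"
  shows "(\<Sum>i\<in>UNIV. c $ i * - ln (c $ i / C)) \<le> (\<Sum>i\<in>UNIV. c $ i * - ln (p $ i))"
    and "p \<noteq> (1 / C) *\<^sub>R c \<Longrightarrow>
      (\<Sum>i\<in>UNIV. c $ i * - ln (c $ i / C)) < (\<Sum>i\<in>UNIV. c $ i * - ln (p $ i))"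
proof -
  have C: "0 < C" unfolding C_def using c by (intro sum_pos) auto
  have slack: "(\<Sum>i\<in>UNIV. c $ i * - ln (p $ i) + (C * p $ i - c $ i)) = (\<Sum>i\<in>UNIV. c $ i * - ln (p $ i))"
    using p(2) by (simp add: sum.distrib sum_subtractf sum_negf C_def flip: sum_distrib_left)
  have "(\<Sum>i\<in>UNIV. c $ i * - ln (c $ i / C))
      \<le> (\<Sum>i\<in>UNIV. c $ i * - ln (p $ i) + (C * p $ i - c $ i))"
    using c p(1) C by (intro sum_mono gibbs_term_le)
  with slack show "(\<Sum>i\<in>UNIV. c $ i * - ln (c $ i / C)) \<le> (\<Sum>i\<in>UNIV. c $ i * - ln (p $ i))"
    by simp
  assume "p \<noteq> (1 / C) *\<^sub>R c"
  then obtain i where "C * p $ i \<noteq> c $ i"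
    using C by (auto simp: vec_eq_iff field_simps)
  then have "(\<Sum>i\<in>UNIV. c $ i * - ln (c $ i / C))
      < (\<Sum>i\<in>UNIV. c $ i * - ln (p $ i) + (C * p $ i - c $ i))"
  proof (intro sum_strict_mono_ex1 ballI bexI)
    show "c $ j * - ln (c $ j / C) \<le> c $ j * - ln (p $ j) + (C * p $ j - c $ j)" for j
      using c p(1) C by (rule gibbs_term_le)
    show "c $ i * - ln (c $ i / C) < c $ i * - ln (p $ i) + (C * p $ i - c $ i)"
      using c p(1) C \<open>C * p $ i \<noteq> c $ i\<close> by (rule gibbs_term_less)
  qed auto
  with slack show "(\<Sum>i\<in>UNIV. c $ i * - ln (c $ i / C)) < (\<Sum>i\<in>UNIV. c $ i * - ln (p $ i))"
    by simp
qed

lemma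
  fixes c :: "real^'m::finite"
  assumes "(\<forall>i. 0 < c $ i) \<or> c = 0"
  shows cross_entropy_ln_le: "cross_entropy c (\<chi> i. ln (c $ i)) \<le> cross_entropy c z"
    and cross_entropy_ln_less: "\<not> argmax_set z \<subseteq> argmax_set c \<Longrightarrow>
      cross_entropy c (\<chi> i. ln (c $ i)) < cross_entropy c z"
proof -
  consider (pos) "\<And>i. 0 < c $ i" | (zero) "c = 0" using assms by blast
  then have "cross_entropy c (\<chi> i. ln (c $ i)) \<le> cross_entropy c z \<and>
    (\<not> argmax_set z \<subseteq> argmax_set c \<longrightarrow> cross_entropy c (\<chi> i. ln (c $ i)) < cross_entropy c z)"
  proof cases
    case pos
    have "softmax z \<noteq> (1 / (\<Sum>j\<in>UNIV. c $ j)) *\<^sub>R c" if "\<not> argmax_set z \<subseteq> argmax_set c"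
    proof
      have "0 < (\<Sum>j\<in>UNIV. c $ j)" using pos by (intro sum_pos) auto
      moreover assume "softmax z = (1 / (\<Sum>j\<in>UNIV. c $ j)) *\<^sub>R c"
      ultimately have "argmax_set z = argmax_set c"
        by (metis argmax_set_softmax argmax_set_scaleR divide_pos_pos zero_less_one)
      with that show False by simp
    qed
    then show ?thesis
      using gibbs_inequality[OF pos, of "softmax z"] softmax_pos[of z] sum_softmax[of z]
      by (simp add: cross_entropy_def softmax_ln pos)
  qed (simp add: cross_entropy_def argmax_set_def)
  then show "cross_entropy c (\<chi> i. ln (c $ i)) \<le> cross_entropy c z"
    and "\<not> argmax_set z \<subseteq> argmax_set c \<Longrightarrow> cross_entropy c (\<chi> i. ln (c $ i)) < cross_entropy c z"
    by blast+
qed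

lemma cross_entropy_mono:
  "(\<And>i. c $ i \<le> d $ i) \<Longrightarrow> cross_entropy c z \<le> cross_entropy d z"
  unfolding cross_entropy_def using softmax_pos[of z] softmax_le_1[of z]
  by (intro sum_mono mult_right_mono) auto

section \<open>Expected cost weights\<close>

definition cost_weights ::
    "('a::finite \<Rightarrow> real) \<Rightarrow> ('a \<Rightarrow> real^'m^'m) \<Rightarrow> ('a \<Rightarrow> real^'m) \<Rightarrow> real^'m::finite" where
  "cost_weights q C \<eta> = (\<Sum>a\<in>UNIV. q a *\<^sub>R (transpose (C a) *v \<eta> a))"

lemma cost_weights_component:
  "cost_weights q C \<eta> $ i = (\<Sum>a\<in>UNIV. \<Sum>y\<in>UNIV. q a * \<eta> a $ y * C a $ y $ i)"
  by (simp add: cost_weights_def matrix_vector_mult_def transpose_def sum_distrib_left mult_ac)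

lemma cross_entropy_cost_weights:
  "cross_entropy (cost_weights q C \<eta>) z = (\<Sum>a\<in>UNIV. \<Sum>y\<in>UNIV. q a * \<eta> a $ y * pcs_loss (C a) y z)"
  unfolding cost_weights_def cross_entropy_sum cross_entropy_scaleR
    cross_entropy_transpose_mult_vec pcs_loss_eq_cross_entropy
  by (simp add: sum_distrib_left mult.assoc)

lemma cost_weights_pos_or_zero:
  assumes "\<And>a. 0 \<le> q a" "\<And>a y. 0 \<le> \<eta> a $ y" "\<And>a. \<eta> a \<noteq> 0" "\<And>a y i. 0 < C a $ y $ i"
  shows "(\<forall>i. 0 < cost_weights q C \<eta> $ i) \<or> cost_weights q C \<eta> = 0"
proof (cases "\<exists>a. q a \<noteq> 0")
  case True
  then obtain a y where "0 < q a" "0 < \<eta> a $ y"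
    using assms(1-3) by (metis vec_eq_iff zero_index order_le_less)
  have "0 < cost_weights q C \<eta> $ i" for i
  proof -
    have "0 < (\<Sum>y\<in>UNIV. q a * \<eta> a $ y * C a $ y $ i)"
      using \<open>0 < q a\<close> \<open>0 < \<eta> a $ y\<close> assms
      by (intro sum_pos2[where i=y]) (auto intro!: mult_nonneg_nonneg mult_pos_pos intro: less_imp_le)
    then show ?thesis
      unfolding cost_weights_component using assms
      by (intro sum_pos2[where i=a]) (auto intro!: sum_nonneg mult_nonneg_nonneg intro: less_imp_le)
  qed
  then show ?thesis by blast
qed (simp add: cost_weights_def)

lemma transpose_Mbar_mult_vec:
  "transpose (Mbar \<kappa> M) *v v = transpose M *v v + (\<kappa> * (\<Sum>y\<in>UNIV. v $ y)) *\<^sub>R 1"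
  by (simp add: Mbar_def vec_eq_iff matrix_vector_mult_def transpose_def sum.distrib
      sum_distrib_left distrib_left mult_ac)

lemma argmax_set_cost_weights_Mbar:
  assumes "\<And>a. (\<Sum>y\<in>UNIV. \<eta> a $ y) = 1"
  shows "argmax_set (cost_weights q (\<lambda>a. Mbar \<kappa> (M a)) \<eta>) = argmax_set (cost_weights q M \<eta>)"
proof -
  have "cost_weights q (\<lambda>a. Mbar \<kappa> (M a)) \<eta> = cost_weights q M \<eta> + (\<kappa> * sum q UNIV) *\<^sub>R 1"
    unfolding cost_weights_def transpose_Mbar_mult_vec
    by (simp add: assms scaleR_add_right sum.distrib mult.commute flip: scaleR_sum_left sum_distrib_left)
  then show ?thesis by (simp add: argmax_set_add_const)
qed

lemma cost_weights_le:
  assumes "\<And>a. 0 \<le> q a \<and> q a \<le> 1" "\<And>a y. 0 \<le> \<eta> a $ y \<and> \<eta> a $ y \<le> 1" "\<And>a y i. 0 \<le> C a $ y $ i"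
  shows "cost_weights q C \<eta> $ i \<le> (\<Sum>a\<in>UNIV. \<Sum>y\<in>UNIV. C a $ y $ i)"
  unfolding cost_weights_component using assms
  by (intro sum_mono mult_left_le_one_le mult_le_one) auto

section \<open>Conditioning on the features\<close>

lemma distr_density_cond_prob:
  fixes h :: "'x \<Rightarrow> real"
  assumes "finite_measure M" and X[measurable]: "X \<in> M \<rightarrow>\<^sub>M S"
    and E[measurable]: "E \<in> sets M" "E' \<in> sets M"
    and h[measurable]: "h \<in> borel_measurable S" and h_prob: "\<And>x. x \<in> space S \<Longrightarrow> 0 \<le> h x \<and> h x \<le> 1"
    and cond: "\<And>B. B \<in> sets S \<Longrightarrow> measure M (X -` B \<inter> E') = (\<integral>w\<in>X -` B \<inter> E. h (X w) \<partial>M)"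
  shows "distr (density M (indicator E')) S X = density (distr (density M (indicator E)) S X) h"
proof (rule measure_eqI)
  interpret finite_measure M by fact
  fix B assume "B \<in> sets (distr (density M (indicator E')) S X)"
  then have B[measurable]: "B \<in> sets S" by simp
  have XB: "X -` B \<inter> F \<in> sets M" if "F \<in> sets M" for F
  proof -
    have "X -` B \<inter> F = (X -` B \<inter> space M) \<inter> F" using sets.sets_into_space[OF that] by blast
    then show ?thesis using measurable_sets[OF X B] that by simp
  qed
  have "integrable M (\<lambda>w. h (X w))"
    using h_prob measurable_space[OF X] by (intro integrable_const_bound[where B=1]) auto
  then have "ennreal (\<integral>w\<in>X -` B \<inter> E. h (X w) \<partial>M) = (\<integral>\<^sup>+w\<in>X -` B \<inter> E. h (X w) \<partial>M)"
    using h_prob measurable_space[OF X] XB[OF E(1)]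
    by (subst nn_set_integral_eq_set_integral) auto
  have "emeasure (distr (density M (indicator E')) S X) B = emeasure M (E' \<inter> (X -` B \<inter> space M))"
    using measurable_sets[OF X B] by (simp add: emeasure_distr emeasure_restricted)
  also have "\<dots> = emeasure M (X -` B \<inter> E')"
    using sets.sets_into_space[OF E(2)] by (intro arg_cong[where f="emeasure M"]) blast
  also have "\<dots> = (\<integral>\<^sup>+w. indicator E w * (ennreal (h (X w)) * indicator B (X w)) \<partial>M)"
    using cond[OF B] XB[OF E(2)] \<open>ennreal _ = _\<close>
    by (simp add: emeasure_eq_measure) (auto intro!: nn_integral_cong split: split_indicator)
  also have "\<dots> = (\<integral>\<^sup>+x. ennreal (h x) * indicator B x \<partial>distr (density M (indicator E)) S X)"
    by (simp add: nn_integral_density nn_integral_distr)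
  also have "\<dots> = emeasure (density (distr (density M (indicator E)) S X) h) B"
    by (simp add: emeasure_density)
  finally show "emeasure (distr (density M (indicator E')) S X) B
      = emeasure (density (distr (density M (indicator E)) S X) h) B" .
qed simp

lemma nn_integral_cond_prob:
  fixes h :: "'x \<Rightarrow> real" and g :: "'x \<Rightarrow> ennreal"
  assumes fin: "finite_measure M" and X[measurable]: "X \<in> M \<rightarrow>\<^sub>M S"
    and [measurable]: "{w \<in> space M. P w} \<in> sets M" "{w \<in> space M. Q w} \<in> sets M"
    and [measurable]: "h \<in> borel_measurable S" and h_prob: "\<And>x. x \<in> space S \<Longrightarrow> 0 \<le> h x \<and> h x \<le> 1"
    and cond: "\<And>B. B \<in> sets S \<Longrightarrow> measure M {w \<in> space M. X w \<in> B \<and> Q w}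
      = (\<integral>w\<in>{w \<in> space M. X w \<in> B \<and> P w}. h (X w) \<partial>M)"
    and [measurable]: "g \<in> borel_measurable S"
  shows "(\<integral>\<^sup>+w. g (X w) * indicator {w \<in> space M. Q w} w \<partial>M)
    = (\<integral>\<^sup>+w. g (X w) * h (X w) * indicator {w \<in> space M. P w} w \<partial>M)"
proof -
  let ?E = "{w \<in> space M. P w}" and ?E' = "{w \<in> space M. Q w}"
  have "{w \<in> space M. X w \<in> B \<and> R w} = X -` B \<inter> {w \<in> space M. R w}" for B R
    by blast
  then have distr_eq: "distr (density M (indicator ?E')) S X = density (distr (density M (indicator ?E)) S X) h"
    using cond by (intro distr_density_cond_prob[OF fin X _ _ _ h_prob]) simp_all
  have "(\<integral>\<^sup>+w. g (X w) * indicator ?E' w \<partial>M) = (\<integral>\<^sup>+x. g x \<partial>distr (density M (indicator ?E')) S X)"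
    by (simp add: nn_integral_distr nn_integral_density mult.commute)
  also have "\<dots> = (\<integral>\<^sup>+x. g x \<partial>density (distr (density M (indicator ?E)) S X) h)"
    by (simp only: distr_eq)
  also have "\<dots> = (\<integral>\<^sup>+w. g (X w) * h (X w) * indicator ?E w \<partial>M)"
    by (simp add: nn_integral_distr nn_integral_density mult_ac)
  finally show ?thesis .
qed

lemma nn_integral_split_finite_values:
  fixes A :: "'w \<Rightarrow> 'a::finite" and Y :: "'w \<Rightarrow> 'y::finite" and f :: "'a \<Rightarrow> 'y \<Rightarrow> 'w \<Rightarrow> ennreal"
  assumes [measurable]: "A \<in> M \<rightarrow>\<^sub>M count_space UNIV" "Y \<in> M \<rightarrow>\<^sub>M count_space UNIV"
    and [measurable]: "{w \<in> space M. P w} \<in> sets M" "\<And>a y. f a y \<in> borel_measurable M"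
  shows "(\<integral>\<^sup>+w. f (A w) (Y w) w * indicator {w \<in> space M. P w} w \<partial>M)
    = (\<Sum>a\<in>UNIV. \<Sum>y\<in>UNIV. \<integral>\<^sup>+w. f a y w * indicator {w \<in> space M. A w = a \<and> P w \<and> Y w = y} w \<partial>M)"
proof -
  let ?E = "\<lambda>a y. {w \<in> space M. A w = a \<and> P w \<and> Y w = y}"
  have "f (A w) (Y w) w * indicator {w \<in> space M. P w} w = (\<Sum>a\<in>UNIV. \<Sum>y\<in>UNIV. f a y w * indicator (?E a y) w)"
    for w
  proof -
    have "indicator (?E a y) w
        = (if y = Y w then if a = A w then indicator {w \<in> space M. P w} w else 0 else 0 :: ennreal)" for a y
      by (auto split: split_indicator)
    then show ?thesis by (simp add: if_distrib[of "\<lambda>t. _ * t"] cong: if_cong)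
  qed
  then have "(\<integral>\<^sup>+w. f (A w) (Y w) w * indicator {w \<in> space M. P w} w \<partial>M)
      = (\<integral>\<^sup>+w. (\<Sum>a\<in>UNIV. \<Sum>y\<in>UNIV. f a y w * indicator (?E a y) w) \<partial>M)"
    by simp
  also have "\<dots> = (\<Sum>a\<in>UNIV. \<integral>\<^sup>+w. (\<Sum>y\<in>UNIV. f a y w * indicator (?E a y) w) \<partial>M)"
    by (rule nn_integral_sum) measurable
  also have "\<dots> = (\<Sum>a\<in>UNIV. \<Sum>y\<in>UNIV. \<integral>\<^sup>+w. f a y w * indicator (?E a y) w \<partial>M)"
    by (intro sum.cong refl nn_integral_sum) measurable
  finally show ?thesis .
qed

lemma sum_nn_integral_ennreal_indicator:
  fixes f :: "'i \<Rightarrow> 'w \<Rightarrow> real"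
  assumes "finite I" "E \<in> sets M" "\<And>i. i \<in> I \<Longrightarrow> f i \<in> borel_measurable M"
    and "\<And>i w. i \<in> I \<Longrightarrow> w \<in> space M \<Longrightarrow> 0 \<le> f i w"
  shows "(\<Sum>i\<in>I. \<integral>\<^sup>+w. ennreal (f i w) * indicator E w \<partial>M)
    = (\<integral>\<^sup>+w. ennreal (\<Sum>i\<in>I. f i w) * indicator E w \<partial>M)"
proof -
  have "(\<Sum>i\<in>I. \<integral>\<^sup>+w. ennreal (f i w) * indicator E w \<partial>M)
      = (\<integral>\<^sup>+w. (\<Sum>i\<in>I. ennreal (f i w) * indicator E w) \<partial>M)"
    using assms by (intro nn_integral_sum[symmetric]) auto
  also have "\<dots> = (\<integral>\<^sup>+w. ennreal (\<Sum>i\<in>I. f i w) * indicator E w \<partial>M)"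
    using assms by (intro nn_integral_cong) (simp add: sum_ennreal sum_nonneg flip: sum_distrib_right)
  finally show ?thesis .
qed

lemma nn_integral_tower_cond_probs:
  fixes A :: "'w \<Rightarrow> 'a::finite" and Y :: "'w \<Rightarrow> 'y::finite"
    and \<eta> :: "'x \<Rightarrow> 'a \<Rightarrow> 'y \<Rightarrow> real" and q :: "'x \<Rightarrow> 'a \<Rightarrow> real" and loss :: "'a \<Rightarrow> 'y \<Rightarrow> 'x \<Rightarrow> real"
  assumes fin: "finite_measure M" and X[measurable]: "X \<in> M \<rightarrow>\<^sub>M S"
    and [measurable]: "A \<in> M \<rightarrow>\<^sub>M count_space UNIV" "Y \<in> M \<rightarrow>\<^sub>M count_space UNIV"
    and [measurable]: "{w \<in> space M. P w} \<in> sets M"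
    and [measurable]: "\<And>a y. (\<lambda>x. \<eta> x a y) \<in> borel_measurable S"
    and \<eta>_prob: "\<And>x a y. x \<in> space S \<Longrightarrow> 0 \<le> \<eta> x a y \<and> \<eta> x a y \<le> 1"
    and \<eta>_cond: "\<And>B a y. B \<in> sets S \<Longrightarrow>
      measure M {w \<in> space M. X w \<in> B \<and> A w = a \<and> P w \<and> Y w = y}
      = (\<integral>w\<in>{w \<in> space M. X w \<in> B \<and> A w = a \<and> P w}. \<eta> (X w) a y \<partial>M)"
    and [measurable]: "\<And>a. (\<lambda>x. q x a) \<in> borel_measurable S"
    and q_prob: "\<And>x a. x \<in> space S \<Longrightarrow> 0 \<le> q x a \<and> q x a \<le> 1"
    and q_cond: "\<And>B a. B \<in> sets S \<Longrightarrow>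
      measure M {w \<in> space M. X w \<in> B \<and> A w = a \<and> P w}
      = (\<integral>w\<in>{w \<in> space M. X w \<in> B \<and> P w}. q (X w) a \<partial>M)"
    and [measurable]: "\<And>a y. loss a y \<in> borel_measurable S" and loss_nonneg: "\<And>a y x. 0 \<le> loss a y x"
  shows "(\<integral>\<^sup>+w. ennreal (loss (A w) (Y w) (X w)) * indicator {w \<in> space M. P w} w \<partial>M)
    = (\<integral>\<^sup>+w. ennreal (\<Sum>a\<in>UNIV. \<Sum>y\<in>UNIV. q (X w) a * \<eta> (X w) a y * loss a y (X w))
              * indicator {w \<in> space M. P w} w \<partial>M)"
proof -
  let ?E = "{w \<in> space M. P w}"
  have "(\<integral>\<^sup>+w. ennreal (loss (A w) (Y w) (X w)) * indicator ?E w \<partial>M) = (\<Sum>a\<in>UNIV. \<Sum>y\<in>UNIV.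
      \<integral>\<^sup>+w. ennreal (loss a y (X w)) * indicator {w \<in> space M. A w = a \<and> P w \<and> Y w = y} w \<partial>M)"
    by (rule nn_integral_split_finite_values) measurable
  also have "\<dots> = (\<Sum>a\<in>UNIV. \<Sum>y\<in>UNIV.
      \<integral>\<^sup>+w. ennreal (q (X w) a * \<eta> (X w) a y * loss a y (X w)) * indicator ?E w \<partial>M)"
  proof (intro sum.cong refl)
    fix a y
    have "(\<integral>\<^sup>+w. ennreal (loss a y (X w)) * indicator {w \<in> space M. A w = a \<and> P w \<and> Y w = y} w \<partial>M)
        = (\<integral>\<^sup>+w. ennreal (loss a y (X w)) * \<eta> (X w) a y * indicator {w \<in> space M. A w = a \<and> P w} w \<partial>M)"
      using \<eta>_prob \<eta>_cond by (intro nn_integral_cond_prob[OF fin X]) simp_all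
    also have "\<dots> = (\<integral>\<^sup>+w. ennreal (loss a y (X w)) * \<eta> (X w) a y * q (X w) a * indicator ?E w \<partial>M)"
      using q_prob q_cond by (intro nn_integral_cond_prob[OF fin X]) simp_all
    also have "\<dots> = (\<integral>\<^sup>+w. ennreal (q (X w) a * \<eta> (X w) a y * loss a y (X w)) * indicator ?E w \<partial>M)"
      using measurable_space[OF X] \<eta>_prob q_prob loss_nonneg
      by (intro nn_integral_cong) (simp add: ennreal_mult mult_ac)
    finally show "(\<integral>\<^sup>+w. ennreal (loss a y (X w)) * indicator {w \<in> space M. A w = a \<and> P w \<and> Y w = y} w \<partial>M)
      = \<dots>" .
  qed
  also have "\<dots> = (\<Sum>a\<in>UNIV. \<integral>\<^sup>+w. ennreal (\<Sum>y\<in>UNIV. q (X w) a * \<eta> (X w) a y * loss a y (X w))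
      * indicator ?E w \<partial>M)"
    using measurable_space[OF X] \<eta>_prob q_prob loss_nonneg
    by (intro sum.cong refl sum_nn_integral_ennreal_indicator) auto
  also have "\<dots> = (\<integral>\<^sup>+w. ennreal (\<Sum>a\<in>UNIV. \<Sum>y\<in>UNIV. q (X w) a * \<eta> (X w) a y * loss a y (X w))
      * indicator ?E w \<partial>M)"
    using measurable_space[OF X] \<eta>_prob q_prob loss_nonneg
    by (intro sum_nn_integral_ennreal_indicator) (auto intro!: sum_nonneg)
  finally show ?thesis .
qed

section \<open>Risk minimizers\<close>

lemma borel_measurable_vec_lambda:
  fixes f :: "'x \<Rightarrow> 'm::finite \<Rightarrow> real"
  assumes "\<And>i. (\<lambda>x. f x i) \<in> borel_measurable M"
  shows "(\<lambda>x. \<chi> i. f x i) \<in> borel_measurable M"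
  unfolding borel_measurable_euclidean_space[where f="\<lambda>x. \<chi> i. f x i"]
proof
  fix b :: "real^'m" assume "b \<in> Basis"
  then obtain i where "b = axis i 1" by (auto simp: Basis_vec_def)
  then show "(\<lambda>x. (\<chi> i. f x i) \<bullet> b) \<in> borel_measurable M" using assms[of i] by (simp add: inner_axis)
qed

lemma borel_measurable_vec_nth[measurable (raw)]:
  fixes f :: "'x \<Rightarrow> real^'m::finite"
  shows "f \<in> borel_measurable M \<Longrightarrow> (\<lambda>x. f x $ i) \<in> borel_measurable M"
  by (rule measurable_compose[OF _ borel_measurable_nth])

lemma borel_measurable_cross_entropy[measurable (raw)]:
  fixes c s :: "'x \<Rightarrow> real^'m::finite"
  assumes "\<And>i. (\<lambda>x. c x $ i) \<in> borel_measurable M" "s \<in> borel_measurable M"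
  shows "(\<lambda>x. cross_entropy (c x) (s x)) \<in> borel_measurable M"
  unfolding cross_entropy_def softmax_def vec_lambda_beta using assms by measurable

lemma cond_exp_event_le_iff:
  assumes "emeasure M E \<noteq> 0" "emeasure M E \<noteq> \<infinity>"
  shows "cond_exp_event M f E \<le> cond_exp_event M g E
    \<longleftrightarrow> (\<integral>\<^sup>+w. ennreal (f w) * indicator E w \<partial>M) \<le> (\<integral>\<^sup>+w. ennreal (g w) * indicator E w \<partial>M)"
proof -
  have cancel: "x / emeasure M E * emeasure M E = x" for x
    using assms by (simp add: ennreal_divide_times less_top)
  show ?thesis
    unfolding cond_exp_event_def
  proof
    assume "(\<integral>\<^sup>+w. ennreal (f w) * indicator E w \<partial>M) / emeasure M E
      \<le> (\<integral>\<^sup>+w. ennreal (g w) * indicator E w \<partial>M) / emeasure M E"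
    then have "(\<integral>\<^sup>+w. ennreal (f w) * indicator E w \<partial>M) / emeasure M E * emeasure M E
      \<le> (\<integral>\<^sup>+w. ennreal (g w) * indicator E w \<partial>M) / emeasure M E * emeasure M E"
      by (rule mult_right_mono) simp
    then show "(\<integral>\<^sup>+w. ennreal (f w) * indicator E w \<partial>M) \<le> (\<integral>\<^sup>+w. ennreal (g w) * indicator E w \<partial>M)"
      by (simp only: cancel)
  qed (rule divide_right_mono_ennreal)
qed

lemma AE_eq_if_nn_integral_le:
  fixes f g :: "'w \<Rightarrow> real"
  assumes [measurable]: "f \<in> borel_measurable M" "g \<in> borel_measurable M" "E \<in> sets M"
    and le: "\<And>w. w \<in> space M \<Longrightarrow> 0 \<le> g w \<and> g w \<le> f w"
    and int_le: "(\<integral>\<^sup>+w. ennreal (f w) * indicator E w \<partial>M) \<le> (\<integral>\<^sup>+w. ennreal (g w) * indicator E w \<partial>M)"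
    and fin: "(\<integral>\<^sup>+w. ennreal (g w) * indicator E w \<partial>M) \<noteq> \<infinity>"
  shows "AE w in M. w \<in> E \<longrightarrow> f w = g w"
proof -
  have "AE w in M. ennreal (f w) * indicator E w \<le> ennreal (g w) * indicator E w"
  proof (rule ccontr)
    assume "\<not> ?thesis"
    then have "(\<integral>\<^sup>+w. ennreal (g w) * indicator E w \<partial>M) < (\<integral>\<^sup>+w. ennreal (f w) * indicator E w \<partial>M)"
      using le fin by (intro nn_integral_less) (auto intro!: AE_I2 mult_right_mono ennreal_leI)
    with int_le show False by simp
  qed
  with AE_space show ?thesis
    by eventually_elim (use le in \<open>auto simp: ennreal_le_iff intro: order.antisym\<close>)
qed

lemma AE_argmax_subset_of_cross_entropy_risk_minimal:
  fixes c s_opt :: "'x \<Rightarrow> real^'m::finite"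
  assumes "finite_measure M" and X[measurable]: "X \<in> M \<rightarrow>\<^sub>M S" and E[measurable]: "E \<in> sets M"
    and c[measurable]: "\<And>i. (\<lambda>x. c x $ i) \<in> borel_measurable S"
    \<comment> \<open>c x = 0 where the version q x of P(A | X = x) vanishes; every score is optimal there\<close>
    and c_cases: "\<And>x. x \<in> space S \<Longrightarrow> (\<forall>i. 0 < c x $ i) \<or> c x = 0"
    and c_bound: "\<And>x i. x \<in> space S \<Longrightarrow> c x $ i \<le> b $ i"
    and s_opt[measurable]: "s_opt \<in> borel_measurable S"
    and minimal: "\<And>s. s \<in> borel_measurable S \<Longrightarrow>
      (\<integral>\<^sup>+w. ennreal (cross_entropy (c (X w)) (s_opt (X w))) * indicator E w \<partial>M)
      \<le> (\<integral>\<^sup>+w. ennreal (cross_entropy (c (X w)) (s (X w))) * indicator E w \<partial>M)"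
  shows "AE w in M. w \<in> E \<longrightarrow> argmax_set (s_opt (X w)) \<subseteq> argmax_set (c (X w))"
proof -
  interpret finite_measure M by fact
  define s where "s x = (\<chi> i. ln (c x $ i))" for x
  have s_meas: "s \<in> borel_measurable S"
    unfolding s_def by (rule borel_measurable_vec_lambda) measurable
  have c_nonneg: "0 \<le> c x $ i" if "x \<in> space S" for x i
    using c_cases[OF that] by (metis less_imp_le order_refl zero_index)
  have pointwise: "0 \<le> cross_entropy (c (X w)) (s (X w))
      \<and> cross_entropy (c (X w)) (s (X w)) \<le> cross_entropy (c (X w)) (s_opt (X w))"
    if "w \<in> space M" for w
  proof -
    have x: "X w \<in> space S" using measurable_space[OF X that] .
    show ?thesis
      using cross_entropy_nonneg[OF c_nonneg[OF x]] cross_entropy_ln_le[OF c_cases[OF x]]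
      unfolding s_def by blast
  qed
  have "(\<integral>\<^sup>+w. ennreal (cross_entropy (c (X w)) (s (X w))) * indicator E w \<partial>M)
      \<le> (\<integral>\<^sup>+w. ennreal (cross_entropy b 0) * indicator E w \<partial>M)"
  proof (intro nn_integral_mono mult_right_mono ennreal_leI)
    fix w assume "w \<in> space M"
    then have "X w \<in> space S" by (rule measurable_space[OF X])
    have "cross_entropy (c (X w)) (s (X w)) \<le> cross_entropy (c (X w)) 0"
      unfolding s_def using c_cases[OF \<open>X w \<in> space S\<close>] by (rule cross_entropy_ln_le)
    also have "\<dots> \<le> cross_entropy b 0"
      using c_bound[OF \<open>X w \<in> space S\<close>] by (rule cross_entropy_mono)
    finally show "cross_entropy (c (X w)) (s (X w)) \<le> cross_entropy b 0" .
  qed simp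
  also have "\<dots> < \<infinity>"
    by (simp add: nn_integral_cmult_indicator ennreal_mult_eq_top_iff less_top[symmetric])
  finally have finite_risk:
    "(\<integral>\<^sup>+w. ennreal (cross_entropy (c (X w)) (s (X w))) * indicator E w \<partial>M) \<noteq> \<infinity>"
    by (rule less_imp_neq)
  have risk_meas: "(\<lambda>w. cross_entropy (c (X w)) (r (X w))) \<in> borel_measurable M"
    if "r \<in> borel_measurable S" for r
    using measurable_compose[OF X borel_measurable_cross_entropy[OF c that]] .
  have "AE w in M. w \<in> E \<longrightarrow>
      cross_entropy (c (X w)) (s_opt (X w)) = cross_entropy (c (X w)) (s (X w))"
    by (rule AE_eq_if_nn_integral_le[OF risk_meas[OF s_opt] risk_meas[OF s_meas] E
          pointwise minimal[OF s_meas] finite_risk])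
  then show ?thesis
  proof (elim AE_mp, intro AE_I2 impI)
    fix w assume w: "w \<in> space M" and "w \<in> E"
      and "w \<in> E \<longrightarrow> cross_entropy (c (X w)) (s_opt (X w)) = cross_entropy (c (X w)) (s (X w))"
    then have eq: "cross_entropy (c (X w)) (s (X w)) = cross_entropy (c (X w)) (s_opt (X w))"
      by simp
    show "argmax_set (s_opt (X w)) \<subseteq> argmax_set (c (X w))"
    proof (rule ccontr)
      assume "\<not> argmax_set (s_opt (X w)) \<subseteq> argmax_set (c (X w))"
      with c_cases[OF measurable_space[OF X w]]
      have "cross_entropy (c (X w)) (s (X w)) < cross_entropy (c (X w)) (s_opt (X w))"
        unfolding s_def by (rule cross_entropy_ln_less)
      with eq show False by simp
    qed
  qed
qed

lemma AE_argmax_subset_cost_weights_of_risk_minimal: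
  fixes A :: "'w \<Rightarrow> 'a::finite" and Y :: "'w \<Rightarrow> 'm::finite"
    and \<eta> :: "'x \<Rightarrow> 'a \<Rightarrow> real^'m" and q :: "'x \<Rightarrow> 'a \<Rightarrow> real" and C :: "'a \<Rightarrow> real^'m^'m"
    and s_opt :: "'x \<Rightarrow> real^'m"
  assumes fin: "finite_measure M" and X[measurable]: "X \<in> M \<rightarrow>\<^sub>M S"
    and A[measurable]: "A \<in> M \<rightarrow>\<^sub>M count_space UNIV" and Y[measurable]: "Y \<in> M \<rightarrow>\<^sub>M count_space UNIV"
    and P_sets[measurable]: "{w \<in> space M. P w} \<in> sets M"
    and \<eta>_meas[measurable]: "\<And>a y. (\<lambda>x. \<eta> x a $ y) \<in> borel_measurable S"
    and \<eta>_nonneg: "\<And>x a y. x \<in> space S \<Longrightarrow> 0 \<le> \<eta> x a $ y"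
    and \<eta>_sum: "\<And>x a. x \<in> space S \<Longrightarrow> (\<Sum>y\<in>UNIV. \<eta> x a $ y) = 1"
    and \<eta>_cond: "\<And>B a y. B \<in> sets S \<Longrightarrow>
      measure M {w \<in> space M. X w \<in> B \<and> A w = a \<and> P w \<and> Y w = y}
      = (\<integral>w\<in>{w \<in> space M. X w \<in> B \<and> A w = a \<and> P w}. \<eta> (X w) a $ y \<partial>M)"
    and q_meas[measurable]: "\<And>a. (\<lambda>x. q x a) \<in> borel_measurable S"
    and q_prob: "\<And>x a. x \<in> space S \<Longrightarrow> 0 \<le> q x a \<and> q x a \<le> 1"
    and q_cond: "\<And>B a. B \<in> sets S \<Longrightarrow>
      measure M {w \<in> space M. X w \<in> B \<and> A w = a \<and> P w}
      = (\<integral>w\<in>{w \<in> space M. X w \<in> B \<and> P w}. q (X w) a \<partial>M)"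
    and C_pos: "\<And>a y i. 0 < C a $ y $ i"
    and s_opt[measurable]: "s_opt \<in> borel_measurable S"
    and minimal: "\<And>s. s \<in> borel_measurable S \<Longrightarrow>
      (\<integral>\<^sup>+w. ennreal (pcs_loss (C (A w)) (Y w) (s_opt (X w))) * indicator {w \<in> space M. P w} w \<partial>M)
      \<le> (\<integral>\<^sup>+w. ennreal (pcs_loss (C (A w)) (Y w) (s (X w))) * indicator {w \<in> space M. P w} w \<partial>M)"
  shows "AE w in M. P w \<longrightarrow> argmax_set (s_opt (X w)) \<subseteq> argmax_set (cost_weights (q (X w)) C (\<eta> (X w)))"
proof -
  define c where "c x = cost_weights (q x) C (\<eta> x)" for x
  have \<eta>_prob: "0 \<le> \<eta> x a $ y \<and> \<eta> x a $ y \<le> 1" if "x \<in> space S" for x a y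
    using member_le_sum[of y UNIV "\<lambda>y. \<eta> x a $ y"] \<eta>_nonneg[OF that] \<eta>_sum[OF that] by simp
  have risk: "(\<integral>\<^sup>+w. ennreal (pcs_loss (C (A w)) (Y w) (s (X w))) * indicator {w \<in> space M. P w} w \<partial>M)
      = (\<integral>\<^sup>+w. ennreal (cross_entropy (c (X w)) (s (X w))) * indicator {w \<in> space M. P w} w \<partial>M)"
    if [measurable]: "s \<in> borel_measurable S" for s
    unfolding c_def cross_entropy_cost_weights
  proof (rule nn_integral_tower_cond_probs[where \<eta>="\<lambda>x a y. \<eta> x a $ y"
        and loss="\<lambda>a y x. pcs_loss (C a) y (s x)",
        OF fin X A Y P_sets \<eta>_meas \<eta>_prob \<eta>_cond q_meas q_prob q_cond])
    show "(\<lambda>x. pcs_loss (C a) y (s x)) \<in> borel_measurable S" for a y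
      unfolding pcs_loss_eq_cross_entropy by measurable
    show "0 \<le> pcs_loss (C a) y (s x)" for a y x
      unfolding pcs_loss_eq_cross_entropy using C_pos by (intro cross_entropy_nonneg less_imp_le)
  qed
  have "AE w in M. w \<in> {w \<in> space M. P w} \<longrightarrow> argmax_set (s_opt (X w)) \<subseteq> argmax_set (c (X w))"
  proof (rule AE_argmax_subset_of_cross_entropy_risk_minimal[OF fin X P_sets _ _ _ s_opt])
    show "(\<lambda>x. c x $ i) \<in> borel_measurable S" for i
      unfolding c_def cost_weights_component by measurable
    show "(\<forall>i. 0 < c x $ i) \<or> c x = 0" if "x \<in> space S" for x
    proof -
      have "\<eta> x a \<noteq> 0" for a
        using \<eta>_sum[OF that, of a] by auto
      then show ?thesis
        unfolding c_def using that q_prob \<eta>_nonneg C_pos by (intro cost_weights_pos_or_zero) auto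
    qed
    show "c x $ i \<le> (\<chi> i. \<Sum>a\<in>UNIV. \<Sum>y\<in>UNIV. C a $ y $ i) $ i" if "x \<in> space S" for x i
      unfolding c_def using that q_prob \<eta>_prob C_pos by (simp add: cost_weights_le less_imp_le)
  qed (use minimal risk in simp)
  then show ?thesis
    by (rule AE_mp) (use measurable_space[OF X] in \<open>auto simp: c_def\<close>)
qed

theorem proposition3:
  fixes M :: "'w measure" and \<X> :: "(real^'d) set"
    and X :: "'w \<Rightarrow> real^'d" and A :: "'w \<Rightarrow> 'a::finite"
    and Y :: "'w \<Rightarrow> 'm::finite" and K :: "'w \<Rightarrow> 'k::finite"
    and \<eta> :: "real^'d \<Rightarrow> 'a \<Rightarrow> 'k \<Rightarrow> real^'m"
    and q :: "real^'d \<Rightarrow> 'a \<Rightarrow> real"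
    and Ug :: "'u set" and Ul :: "'k \<Rightarrow> 'u set"
    and D :: "'a \<Rightarrow> 'k \<Rightarrow> 'u \<Rightarrow> real^'m^'m"
    and lam1 lam2 :: "'u \<Rightarrow> real" and mu1 mu2 :: "'k \<Rightarrow> 'u \<Rightarrow> real"
    and \<kappa> :: real and k :: 'k
    and s_opt :: "real^'d \<Rightarrow> real^'m"
  defines "SX \<equiv> restrict_space borel \<X>"
    and "p \<equiv> \<lambda>a k'. measure M {w \<in> space M. A w = a \<and> K w = k'}"
    and "Mk \<equiv> \<lambda>a. Mmat (measure M {w \<in> space M. A w = a \<and> K w = k}) lam1 lam2 (mu1 k) (mu2 k) Ug (Ul k) (D a k)"
    and "Ek \<equiv> {w \<in> space M. K w = k}"
  assumes "prob_space M"
    and "X \<in> M \<rightarrow>\<^sub>M SX"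
    and "A \<in> M \<rightarrow>\<^sub>M count_space UNIV"
    and "Y \<in> M \<rightarrow>\<^sub>M count_space UNIV"
    and "K \<in> M \<rightarrow>\<^sub>M count_space UNIV"
    and "\<And>a k'. p a k' > 0"
    and "finite Ug" and "\<And>k'. finite (Ul k')"
    \<comment> \<open>eta is (a version of) the Bayes score P(Y = y | X = x, A = a, K = k), valued in the simplex\<close>
    and "\<And>a k' y. (\<lambda>x. \<eta> x a k' $ y) \<in> borel_measurable SX"
    and "\<And>x a k' y. x \<in> \<X> \<Longrightarrow> \<eta> x a k' $ y \<ge> 0"
    and "\<And>x a k'. x \<in> \<X> \<Longrightarrow> (\<Sum>y\<in>UNIV. \<eta> x a k' $ y) = 1"
    and "\<And>B a k' y. B \<in> sets SX \<Longrightarrow>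
          measure M {w \<in> space M. X w \<in> B \<and> A w = a \<and> K w = k' \<and> Y w = y}
          = (\<integral>w\<in>{w \<in> space M. X w \<in> B \<and> A w = a \<and> K w = k'}. \<eta> (X w) a k' $ y \<partial>M)"
    \<comment> \<open>q x a is (a version of) the conditional probability P(A = a | X = x, K = k)\<close>
    and "\<And>a. (\<lambda>x. q x a) \<in> borel_measurable SX"
    and "\<And>x a. x \<in> \<X> \<Longrightarrow> 0 \<le> q x a \<and> q x a \<le> 1"
    and "\<And>B a. B \<in> sets SX \<Longrightarrow>
          measure M {w \<in> space M. X w \<in> B \<and> A w = a \<and> K w = k}
          = (\<integral>w\<in>{w \<in> space M. X w \<in> B \<and> K w = k}. q (X w) a \<partial>M)"
    \<comment> \<open>kappa makes all entries of Mbar(a,k) strictly positive\<close>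
    and "\<And>a y i. Mbar \<kappa> (Mk a) $ y $ i > 0"
    \<comment> \<open>s_opt minimizes the expected loss over the local distribution of client k\<close>
    and "s_opt \<in> SX \<rightarrow>\<^sub>M borel"
    and "\<And>s. s \<in> SX \<rightarrow>\<^sub>M borel \<Longrightarrow> 
          cond_exp_event M (\<lambda>w. pcs_loss (Mbar \<kappa> (Mk (A w))) (Y w) (s_opt (X w))) Ek
          \<le> cond_exp_event M (\<lambda>w. pcs_loss (Mbar \<kappa> (Mk (A w))) (Y w) (s (X w))) Ek"
  shows "AE w in M. K w = k \<longrightarrow>
           argmax_set (s_opt (X w))
           \<subseteq> argmax_set (\<Sum>a\<in>UNIV. q (X w) a *\<^sub>R (transpose (Mk a) *v \<eta> (X w) a k))"
proof -
  interpret prob_space M by fact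
  note [measurable] = \<open>K \<in> M \<rightarrow>\<^sub>M count_space UNIV\<close>
  have space_SX: "space SX = \<X>" by (simp add: SX_def space_restrict_space)
  have Ek_sets: "Ek \<in> sets M" unfolding Ek_def by measurable
  have "0 < measure M {w \<in> space M. A w = undefined \<and> K w = k}"
    using assms(10) by (simp add: p_def)
  also have "\<dots> \<le> measure M Ek"
    using Ek_sets by (intro finite_measure_mono) (auto simp: Ek_def)
  finally have Ek_pos: "emeasure M Ek \<noteq> 0" by (simp add: emeasure_eq_measure)
  have minimal: "(\<integral>\<^sup>+w. ennreal (pcs_loss (Mbar \<kappa> (Mk (A w))) (Y w) (s_opt (X w))) * indicator Ek w \<partial>M)
      \<le> (\<integral>\<^sup>+w. ennreal (pcs_loss (Mbar \<kappa> (Mk (A w))) (Y w) (s (X w))) * indicator Ek w \<partial>M)"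
    if "s \<in> borel_measurable SX" for s
    using assms(22)[OF that] by (simp add: cond_exp_event_le_iff[OF Ek_pos])
  have "AE w in M. K w = k \<longrightarrow> argmax_set (s_opt (X w))
      \<subseteq> argmax_set (cost_weights (q (X w)) (\<lambda>a. Mbar \<kappa> (Mk a)) (\<lambda>a. \<eta> (X w) a k))"
    by (rule AE_argmax_subset_cost_weights_of_risk_minimal[where P="\<lambda>w. K w = k" and \<eta>="\<lambda>x a. \<eta> x a k",
          OF finite_measure_axioms assms(6-8) Ek_sets[unfolded Ek_def] assms(13) assms(14,15)[folded space_SX]
          assms(16,17) assms(18)[folded space_SX] assms(19-21) minimal[unfolded Ek_def]])
  moreover have "argmax_set (cost_weights (q x) (\<lambda>a. Mbar \<kappa> (Mk a)) (\<lambda>a. \<eta> x a k))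
      = argmax_set (\<Sum>a\<in>UNIV. q x a *\<^sub>R (transpose (Mk a) *v \<eta> x a k))" if "x \<in> \<X>" for x
    using argmax_set_cost_weights_Mbar[of "\<lambda>a. \<eta> x a k"] assms(15)[OF that]
    by (simp add: cost_weights_def)
  ultimately show ?thesis
    by (elim AE_mp) (use measurable_space[OF assms(6)] space_SX in auto)
qed

end
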